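(* Let $\nu=(\nu_1,\ldots,\nu_p)$ be a vector of $p$-orthogonality for $\{P_n\}$, and let $\{P^{(p)}_n\}$ be the sequence associated with the Darboux transformation $J^{(p)}$ of some Darboux factorization of $J-CI$. Then $\nu^{(p)}=\big((z-C)\nu_1,(z-C)\nu_2,\ldots,(z-C)\nu_p\big)$ is a vector of $p$-orthogonality for $\{P^{(p)}_n\}$.
   Context: Fix $p\in\mathbb{N}$. Let $J=(a_{n,m})_{n,m\ge0}$ be an infinite matrix with $a_{n,n+1}=1$, $a_{n,m}=0$ for $m>n+1$ or $m<n-p$, and $a_{n+p,n}\neq0$ for all $n\ge0$. Define polynomials by $P_{-p}=\cdots=P_{-1}=0$, $P_0\equiv1$, $P_{n+1}(z)=(z-a_{n,n})P_n(z)-\sum_{i=1}^p a_{n,n-i}P_{n-i}(z)$ for $n\ge0$. Fix $C\in\mathbb{C}$ with $P_n(C)\neq0$ for all $n\ge1$. A Darboux factorization of $J-CI$ is a factorization $J-CI=L^{(1)}L^{(2)}\cdots L^{(p)}U$ where, indexing rows and columns by $1,2,\ldots$, $U$ is upper bidiagonal with $U_{k,k}=\gamma_{(k-1)(p+1)+1}$, $U_{k,k+1}=1$, and for $j=1,\ldots,p$, $L^{(j)}$ is lower bidiagonal with ones on the diagonal and $L^{(j)}_{k+1,k}=\gamma_{(k-1)(p+1)+j+1}\neq0$ for all $k\ge1$. The Darboux transformation $J^{(p)}=CI+UL^{(1)}\cdots L^{(p)}$ is lower Hessenberg with ones on the superdiagonal, and $\{P^{(p)}_n\}_{n\ge0}$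 is the unique sequence of polynomials with $P^{(p)}_0\equiv1$ such that $v(z)=(P^{(p)}_0(z),P^{(p)}_1(z),\ldots)^T$ satisfies $J^{(p)}v(z)=zv(z)$. A vector of $p$-orthogonality for a sequence of polynomials $\{Q_n\}$ is a vector $(\nu_1,\ldots,\nu_p)$ of linear functionals on polynomials with, for each $r=1,\ldots,p$ and $k=0,1,\ldots$: $\nu_r[z^kQ_n]=0$ for all $n\ge kp+r$, and $\nu_r[z^kQ_{kp+r-1}]\neq0$. For a functional $\mu$, $(z-C)\mu$ is the functional $q\mapsto\mu[(z-C)q]$. *)

theory Defs
  imports "HOL-Computational_Algebra.Polynomial"
begin

text \<open>Infinite matrices are functions nat => nat => complex, indexed from 0
  (row/column k here corresponds to row/column k+1 in the paper).\<close>

type_synonym imat = "nat \<Rightarrow> nat \<Rightarrow> complex"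

text \<open>Product of infinite matrices, for row-finite left factor
  (all matrices occurring here are banded, so this is the usual product).\<close>
definition mmul :: "imat \<Rightarrow> imat \<Rightarrow> imat" where
  "mmul A B i k = (\<Sum>j\<in>{j. A i j \<noteq> 0}. A i j * B j k)"

definition imat_id :: imat where
  "imat_id i k = (if i = k then 1 else 0)"

text \<open>Upper bidiagonal factor U: U(k,k) = gamma((k-1)(p+1)+1), U(k,k+1) = 1 (paper, 1-based).\<close>
definition Umat :: "nat \<Rightarrow> (nat \<Rightarrow> complex) \<Rightarrow> imat" where
  "Umat p \<gamma> i k = (if k = i then \<gamma> (i * (p + 1) + 1)
                    else if k = i + 1 then 1 else 0)"

text \<open>Lower bidiagonal factor L^(j): ones on diagonal, L(k+1,k) = gamma((k-1)(p+1)+j+1) (paper, 1-based).\<close>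
definition Lmat :: "nat \<Rightarrow> (nat \<Rightarrow> complex) \<Rightarrow> nat \<Rightarrow> imat" where
  "Lmat p \<gamma> j i k = (if i = k then 1
                      else if i = k + 1 then \<gamma> (k * (p + 1) + j + 1) else 0)"

definition Lprod :: "nat \<Rightarrow> (nat \<Rightarrow> complex) \<Rightarrow> imat \<Rightarrow> imat" where
  "Lprod p \<gamma> M = foldr (\<lambda>j N. mmul (Lmat p \<gamma> j) N) [1..<p+1] M"

definition darboux_factorization :: "nat \<Rightarrow> imat \<Rightarrow> complex \<Rightarrow> (nat \<Rightarrow> complex) \<Rightarrow> bool" where
  "darboux_factorization p J C \<gamma> \<longleftrightarrow>
     (\<forall>j\<in>{1..p}. \<forall>k. \<gamma> (k * (p + 1) + j + 1) \<noteq> 0) \<and>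
     (\<forall>i k. J i k - (if i = k then C else 0) = Lprod p \<gamma> (Umat p \<gamma>) i k)"

definition darboux_transform :: "nat \<Rightarrow> complex \<Rightarrow> (nat \<Rightarrow> complex) \<Rightarrow> imat" where
  "darboux_transform p C \<gamma> i k =
     (if i = k then C else 0) + mmul (Umat p \<gamma>) (Lprod p \<gamma> imat_id) i k"

definition lin_functional :: "(complex poly \<Rightarrow> complex) \<Rightarrow> bool" where
  "lin_functional \<mu> \<longleftrightarrow> (\<forall>q r. \<mu> (q + r) = \<mu> q + \<mu> r) \<and> (\<forall>c q. \<mu> (smult c q) = c * \<mu> q)"

definition p_orth :: "nat \<Rightarrow> (nat \<Rightarrow> complex poly \<Rightarrow> complex) \<Rightarrow> (nat \<Rightarrow> complex poly) \<Rightarrow> bool" where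
  "p_orth p \<nu> Q \<longleftrightarrow>
     (\<forall>r\<in>{1..p}. lin_functional (\<nu> r)) \<and>
     (\<forall>r\<in>{1..p}. \<forall>k::nat.
        (\<forall>n. n \<ge> k * p + r \<longrightarrow> \<nu> r (monom 1 k * Q n) = 0) \<and>
        \<nu> r (monom 1 k * Q (k * p + r - 1)) \<noteq> 0)"

end

theory Submission
  imports Defs
begin

text \<open>Put \<open>w = U P\<close>, i.e. \<open>w\<^sub>n = U\<^sub>n\<^sub>n P\<^sub>n + P\<^sub>n\<^sub>+\<^sub>1\<close>. The factorization gives
  \<open>L w = (J - C I) P = (z - C) P\<close> with \<open>L = L\<^sup>(\<^sup>1\<^sup>) \<cdots> L\<^sup>(\<^sup>p\<^sup>)\<close> lower unitriangular, so every
  \<open>w\<^sub>n\<close> is divisible by \<open>z - C\<close>. Since \<open>J\<^sup>(\<^sup>p\<^sup>) w = C w + U L w = C w + (z - C) w = z w\<close> and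
  \<open>w\<^sub>0 = z - C\<close>, the quotients \<open>w\<^sub>n / (z - C)\<close> form the eigenvector of the lower Hessenberg
  matrix \<open>J\<^sup>(\<^sup>p\<^sup>)\<close> starting with 1, which is \<open>P\<^sup>(\<^sup>p\<^sup>)\<close>. This is the Christoffel formula
  \<open>(z - C) P\<^sup>(\<^sup>p\<^sup>)\<^sub>n = U\<^sub>n\<^sub>n P\<^sub>n + P\<^sub>n\<^sub>+\<^sub>1\<close>, through which the orthogonality relations of \<open>\<nu>\<close>
  for \<open>P\<close> pass to \<open>(z - C) \<nu>\<close> for \<open>P\<^sup>(\<^sup>p\<^sup>)\<close>; here \<open>U\<^sub>n\<^sub>n \<noteq> 0\<close> because \<open>P\<^sub>n\<^sub>+\<^sub>1(C) \<noteq> 0\<close>.\<close>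

definition imat_apply :: "imat \<Rightarrow> (nat \<Rightarrow> complex poly) \<Rightarrow> nat \<Rightarrow> complex poly" where
  "imat_apply A u i = (\<Sum>j\<in>{j. A i j \<noteq> 0}. smult (A i j) (u j))"

definition row_finite :: "imat \<Rightarrow> bool" where
  "row_finite A \<longleftrightarrow> (\<forall>i. finite {j. A i j \<noteq> 0})"

definition lower_unitriangular :: "imat \<Rightarrow> bool" where
  "lower_unitriangular A \<longleftrightarrow> (\<forall>i k. i < k \<longrightarrow> A i k = 0) \<and> (\<forall>i. A i i = 1)"

lemma smult_sum_right: "smult c (\<Sum>i\<in>S. f i) = (\<Sum>i\<in>S. smult c (f i))"
  by (induction S rule: infinite_finite_induct) (auto simp: smult_add_right)

lemma imat_apply_eq_sum:
  "finite F \<Longrightarrow> {j. A i j \<noteq> 0} \<subseteq> F \<Longrightarrow> imat_apply A u i = (\<Sum>j\<in>F. smult (A i j) (u j))"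
  unfolding imat_apply_def by (rule sum.mono_neutral_left) auto

lemma mmul_eq_sum:
  "finite F \<Longrightarrow> {j. A i j \<noteq> 0} \<subseteq> F \<Longrightarrow> mmul A B i k = (\<Sum>j\<in>F. A i j * B j k)"
  unfolding mmul_def by (rule sum.mono_neutral_left) auto

lemma imat_apply_mult_left: "imat_apply A (\<lambda>m. q * u m) i = q * imat_apply A u i"
  by (simp only: imat_apply_def sum_distrib_left mult_smult_right)

lemma support_mmul_subset:
  "{k. mmul A B i k \<noteq> 0} \<subseteq> (\<Union>j\<in>{j. A i j \<noteq> 0}. {k. B j k \<noteq> 0})"
proof
  fix k assume "k \<in> {k. mmul A B i k \<noteq> 0}"
  then obtain j where "A i j \<noteq> 0" "A i j * B j k \<noteq> 0"
    unfolding mmul_def by (auto elim: sum.not_neutral_contains_not_neutral)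
  then show "k \<in> (\<Union>j\<in>{j. A i j \<noteq> 0}. {k. B j k \<noteq> 0})" by auto
qed

lemma row_finite_mmul:
  assumes "row_finite A" "row_finite B" shows "row_finite (mmul A B)"
  unfolding row_finite_def
proof
  fix i
  have "finite (\<Union>j\<in>{j. A i j \<noteq> 0}. {k. B j k \<noteq> 0})"
    using assms unfolding row_finite_def by blast
  then show "finite {k. mmul A B i k \<noteq> 0}" by (rule finite_subset[OF support_mmul_subset])
qed

lemma imat_apply_mmul:
  assumes "row_finite A" "row_finite B"
  shows "imat_apply (mmul A B) u i = imat_apply A (imat_apply B u) i"
proof -
  define S where "S = {j. A i j \<noteq> 0}"
  define T where "T = (\<Union>j\<in>S. {k. B j k \<noteq> 0})"
  have "finite S" using assms unfolding row_finite_def S_def by blast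
  then have fin_T: "finite T" using assms unfolding row_finite_def T_def by blast
  have "{k. mmul A B i k \<noteq> 0} \<subseteq> T"
    using support_mmul_subset unfolding T_def S_def .
  then have "imat_apply (mmul A B) u i = (\<Sum>k\<in>T. smult (mmul A B i k) (u k))"
    by (rule imat_apply_eq_sum[OF fin_T])
  also have "\<dots> = (\<Sum>k\<in>T. \<Sum>j\<in>S. smult (A i j) (smult (B j k) (u k)))"
    by (simp add: mmul_def S_def smult_sum)
  also have "\<dots> = (\<Sum>j\<in>S. \<Sum>k\<in>T. smult (A i j) (smult (B j k) (u k)))"
    by (rule sum.swap)
  also have "\<dots> = (\<Sum>j\<in>S. smult (A i j) (imat_apply B u j))"
  proof (rule sum.cong[OF refl])
    fix j assume "j \<in> S"
    then have "{k. B j k \<noteq> 0} \<subseteq> T" unfolding T_def by blast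
    then show "(\<Sum>k\<in>T. smult (A i j) (smult (B j k) (u k))) = smult (A i j) (imat_apply B u j)"
      by (simp add: imat_apply_eq_sum[OF fin_T] smult_sum_right)
  qed
  also have "\<dots> = imat_apply A (imat_apply B u) i" by (simp add: imat_apply_def S_def)
  finally show ?thesis .
qed

lemma imat_apply_add:
  assumes "row_finite A" "row_finite B"
  shows "imat_apply (\<lambda>i k. A i k + B i k) u i = imat_apply A u i + imat_apply B u i"
proof -
  define F where "F = {j. A i j \<noteq> 0} \<union> {j. B i j \<noteq> 0}"
  have fin_F: "finite F" using assms unfolding row_finite_def F_def by blast
  have "imat_apply (\<lambda>i k. A i k + B i k) u i = (\<Sum>j\<in>F. smult (A i j + B i j) (u j))"
    by (rule imat_apply_eq_sum[OF fin_F]) (auto simp: F_def)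
  also have "\<dots> = (\<Sum>j\<in>F. smult (A i j) (u j)) + (\<Sum>j\<in>F. smult (B i j) (u j))"
    by (simp add: smult_add_left sum.distrib)
  also have "\<dots> = imat_apply A u i + imat_apply B u i"
    by (simp add: imat_apply_eq_sum[OF fin_F] F_def)
  finally show ?thesis .
qed

lemma support_diag_subset: "{k. (if i = k then c else 0) \<noteq> 0} \<subseteq> {i}"
  by auto

lemma row_finite_diag: "row_finite (\<lambda>i k. if i = k then c else 0)"
  unfolding row_finite_def by (simp add: finite_subset[OF support_diag_subset])

lemma imat_apply_diag: "imat_apply (\<lambda>i k. if i = k then c else 0) u i = smult c (u i)"
  using imat_apply_eq_sum[OF _ support_diag_subset] by simp

lemma row_finite_foldr_mmul:
  "(\<And>j. row_finite (F j)) \<Longrightarrow> row_finite M \<Longrightarrow>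
   row_finite (foldr (\<lambda>j N. mmul (F j) N) xs M)"
  by (induction xs) (auto intro: row_finite_mmul)

lemma imat_apply_foldr_mmul:
  assumes "\<And>j. row_finite (F j)" "row_finite M"
  shows "imat_apply (foldr (\<lambda>j N. mmul (F j) N) xs M) u
           = foldr (\<lambda>j w. imat_apply (F j) w) xs (imat_apply M u)"
proof (induction xs)
  case (Cons x xs)
  have "imat_apply (mmul (F x) (foldr (\<lambda>j N. mmul (F j) N) xs M)) u
          = imat_apply (F x) (imat_apply (foldr (\<lambda>j N. mmul (F j) N) xs M) u)"
    by (rule ext, rule imat_apply_mmul[OF assms(1) row_finite_foldr_mmul[OF assms]])
  with Cons.IH show ?case by simp
qed simp

lemma imat_apply_imat_id: "imat_apply imat_id u = u"
proof -
  have id_eq: "imat_id = (\<lambda>i k. if i = k then 1 else 0)" by (intro ext) (simp add: imat_id_def)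
  show ?thesis unfolding id_eq by (simp add: fun_eq_iff imat_apply_diag)
qed

lemma support_subset_atMost_Suc:
  "(\<And>m. Suc n < m \<Longrightarrow> A n m = 0) \<Longrightarrow> {m. A n m \<noteq> 0} \<subseteq> {..Suc n}"
  by (auto simp flip: not_less)

lemma row_finite_hessenberg:
  assumes "\<And>n m. Suc n < m \<Longrightarrow> A n m = 0" shows "row_finite A"
  unfolding row_finite_def
proof
  fix n show "finite {m. A n m \<noteq> 0}"
    by (rule finite_subset[OF support_subset_atMost_Suc]) (use assms in auto)
qed

lemma hessenberg_eigenvector_unique:
  assumes band: "\<And>n m. Suc n < m \<Longrightarrow> A n m = 0" and super: "\<And>n. A n (Suc n) = 1"
    and u: "\<And>n. imat_apply A u n = [:0, 1:] * u n"
    and v: "\<And>n. imat_apply A v n = [:0, 1:] * v n"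
    and "u 0 = v 0"
  shows "u = v"
proof -
  have step: "w (Suc n) = [:0, 1:] * w n - (\<Sum>m\<le>n. smult (A n m) (w m))"
    if "\<And>n. imat_apply A w n = [:0, 1:] * w n" for w n
  proof -
    have "{m. A n m \<noteq> 0} \<subseteq> {..Suc n}" by (rule support_subset_atMost_Suc) (rule band)
    then have "imat_apply A w n = (\<Sum>m\<le>Suc n. smult (A n m) (w m))"
      by (intro imat_apply_eq_sum) auto
    then show ?thesis using that[of n] super[of n] by (simp add: algebra_simps)
  qed
  have "\<forall>m\<le>n. u m = v m" for n
  proof (induction n)
    case 0 with \<open>u 0 = v 0\<close> show ?case by simp
  next
    case (Suc n)
    then have "(\<Sum>m\<le>n. smult (A n m) (u m)) = (\<Sum>m\<le>n. smult (A n m) (v m))"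
      by (intro sum.cong) auto
    then have "u (Suc n) = v (Suc n)"
      using Suc step[of u, OF u] step[of v, OF v] by simp
    with Suc show ?case by (auto simp: le_Suc_eq)
  qed
  then show ?thesis by (intro ext) (meson le_refl)
qed

lemma support_lower_unitriangular:
  "lower_unitriangular A \<Longrightarrow> {j. A i j \<noteq> 0} \<subseteq> {..i}"
  unfolding lower_unitriangular_def by (auto simp flip: not_less)

lemma row_finite_lower_unitriangular: "lower_unitriangular A \<Longrightarrow> row_finite A"
  unfolding row_finite_def by (blast intro: finite_subset[OF support_lower_unitriangular])

lemma imat_apply_lower_unitriangular:
  assumes "lower_unitriangular A"
  shows "imat_apply A u n = u n + (\<Sum>j<n. smult (A n j) (u j))"
proof -
  have "imat_apply A u n = (\<Sum>j<Suc n. smult (A n j) (u j))"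
    using support_lower_unitriangular[OF assms] lessThan_Suc_atMost
    by (intro imat_apply_eq_sum) auto
  with assms show ?thesis by (simp add: lower_unitriangular_def)
qed

lemma lower_unitriangular_mmul:
  assumes A: "lower_unitriangular A" and B: "lower_unitriangular B"
  shows "lower_unitriangular (mmul A B)"
proof -
  have upper: "\<And>i k. i < k \<Longrightarrow> B i k = 0" and diag: "\<And>i. B i i = 1"
    using B unfolding lower_unitriangular_def by auto
  have prod: "mmul A B i k = (\<Sum>j<Suc i. A i j * B j k)" for i k
    using support_lower_unitriangular[OF A] lessThan_Suc_atMost by (intro mmul_eq_sum) auto
  have "mmul A B i k = 0" if "i < k" for i k
    unfolding prod using that by (auto intro!: sum.neutral simp: upper)
  moreover have "mmul A B i i = 1" for i
    using A by (simp add: prod upper diag lower_unitriangular_def)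
  ultimately show ?thesis unfolding lower_unitriangular_def by blast
qed

lemma lower_unitriangular_foldr_mmul:
  "(\<And>j. lower_unitriangular (F j)) \<Longrightarrow> lower_unitriangular M \<Longrightarrow>
   lower_unitriangular (foldr (\<lambda>j N. mmul (F j) N) xs M)"
  by (induction xs) (auto intro: lower_unitriangular_mmul)

lemma dvd_of_dvd_imat_apply_lower_unitriangular:
  assumes A: "lower_unitriangular A" and dvd: "\<And>n. d dvd imat_apply A u n"
  shows "d dvd u n"
proof (induction n rule: less_induct)
  case (less n)
  then have "d dvd (\<Sum>j<n. smult (A n j) (u j))"
    by (intro dvd_sum dvd_smult) auto
  with dvd[of n] show ?case
    unfolding imat_apply_lower_unitriangular[OF A] by (metis dvd_add_left_iff)
qed

lemma linear_factor_mult: "[:- c, 1:] * q = [:0, 1:] * q - smult c (q :: complex poly)"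
  by (simp add: mult_pCons_left)

lemma support_Umat: "{k. Umat p \<gamma> i k \<noteq> 0} \<subseteq> {i, Suc i}"
  by (auto simp: Umat_def split: if_splits)

lemma row_finite_Umat: "row_finite (Umat p \<gamma>)"
  unfolding row_finite_def by (blast intro: finite_subset[OF support_Umat])

lemma mmul_Umat: "mmul (Umat p \<gamma>) B n m = Umat p \<gamma> n n * B n m + B (Suc n) m"
  by (subst mmul_eq_sum[OF _ support_Umat]) (auto simp: Umat_def)

lemma imat_apply_Umat:
  "imat_apply (Umat p \<gamma>) u n = smult (Umat p \<gamma> n n) (u n) + u (Suc n)"
  by (subst imat_apply_eq_sum[OF _ support_Umat]) (auto simp: Umat_def)

lemma lower_unitriangular_Lmat: "lower_unitriangular (Lmat p \<gamma> j)"
  by (auto simp: lower_unitriangular_def Lmat_def)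

lemma lower_unitriangular_imat_id: "lower_unitriangular imat_id"
  by (auto simp: lower_unitriangular_def imat_id_def)

lemma lower_unitriangular_Lprod: "lower_unitriangular (Lprod p \<gamma> imat_id)"
  unfolding Lprod_def
  by (intro lower_unitriangular_foldr_mmul lower_unitriangular_Lmat lower_unitriangular_imat_id)

lemma imat_apply_Lprod:
  assumes "row_finite M"
  shows "imat_apply (Lprod p \<gamma> M) u = imat_apply (Lprod p \<gamma> imat_id) (imat_apply M u)"
proof -
  have Lmat: "row_finite (Lmat p \<gamma> j)" for j
    by (rule row_finite_lower_unitriangular[OF lower_unitriangular_Lmat])
  have id: "row_finite imat_id"
    by (rule row_finite_lower_unitriangular[OF lower_unitriangular_imat_id])
  show ?thesis
    unfolding Lprod_def imat_apply_foldr_mmul[OF Lmat assms] imat_apply_foldr_mmul[OF Lmat id]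
    by (simp add: imat_apply_imat_id)
qed

lemma darboux_transform_superdiag: "darboux_transform p C \<gamma> n (Suc n) = 1"
  using lower_unitriangular_Lprod[of p \<gamma>]
  by (simp add: darboux_transform_def mmul_Umat lower_unitriangular_def)

lemma darboux_transform_above_superdiag: "Suc n < m \<Longrightarrow> darboux_transform p C \<gamma> n m = 0"
  using lower_unitriangular_Lprod[of p \<gamma>]
  by (simp add: darboux_transform_def mmul_Umat lower_unitriangular_def)

lemma imat_apply_darboux_transform:
  "imat_apply (darboux_transform p C \<gamma>) u n
     = smult C (u n) + imat_apply (Umat p \<gamma>) (imat_apply (Lprod p \<gamma> imat_id) u) n"
proof -
  have L: "row_finite (Lprod p \<gamma> imat_id)"
    by (rule row_finite_lower_unitriangular[OF lower_unitriangular_Lprod])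
  have "darboux_transform p C \<gamma>
          = (\<lambda>i k. (if i = k then C else 0) + mmul (Umat p \<gamma>) (Lprod p \<gamma> imat_id) i k)"
    by (intro ext) (simp add: darboux_transform_def)
  then show ?thesis
    by (simp add: imat_apply_add[OF row_finite_diag row_finite_mmul[OF row_finite_Umat L]]
        imat_apply_diag imat_apply_mmul[OF row_finite_Umat L])
qed

lemma recurrence_eigenvector:
  fixes a :: imat and P :: "nat \<Rightarrow> complex poly"
  assumes super: "\<And>n. a n (n + 1) = 1"
    and band_up: "\<And>n m. m > n + 1 \<Longrightarrow> a n m = 0"
    and band_low: "\<And>n m. m + p < n \<Longrightarrow> a n m = 0"
    and rec: "\<And>n. P (Suc n) = [:- a n n, 1:] * P n
                 - (\<Sum>i\<in>{1..p}. if i \<le> n then smult (a n (n - i)) (P (n - i)) else 0)"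
  shows "imat_apply a P n = [:0, 1:] * P n"
proof -
  define f where "f m = smult (a n m) (P m)" for m
  define S where "S = (\<Sum>i\<in>{1..p}. if i \<le> n then f (n - i) else 0)"
  have PS: "P (Suc n) = [:- a n n, 1:] * P n - S"
    using rec[of n] unfolding S_def f_def .
  have "(\<Sum>m<n. f m) = (\<Sum>i<n. f (n - Suc i))"
    by (rule sum.nat_diff_reindex[symmetric])
  also have "\<dots> = (\<Sum>i\<in>{Suc 0..n}. f (n - i))"
    by (subst sum.atLeast1_atMost_eq) simp
  also have "\<dots> = (\<Sum>i\<in>{i\<in>{1..p}. i \<le> n}. f (n - i))"
  proof (rule sum.mono_neutral_right)
    have "a n (n - i) = 0" if "p < i" "i \<le> n" for i
      using band_low[of "n - i" n] that by simp
    then show "\<forall>i\<in>{Suc 0..n} - {i\<in>{1..p}. i \<le> n}. f (n - i) = 0"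
      by (auto simp: f_def) (meson not_le)
  qed auto
  also have "\<dots> = S"
    unfolding S_def by (rule sum.inter_filter) simp
  finally have below: "(\<Sum>m<n. f m) = S" .
  have "{m. a n m \<noteq> 0} \<subseteq> {..<Suc (Suc n)}"
  proof
    fix m assume "m \<in> {m. a n m \<noteq> 0}"
    then show "m \<in> {..<Suc (Suc n)}" using band_up[of n m] by (cases "m > n + 1") auto
  qed
  then have "imat_apply a P n = (\<Sum>m<Suc (Suc n). f m)"
    unfolding f_def by (intro imat_apply_eq_sum) auto
  also have "\<dots> = (\<Sum>m<n. f m) + f n + f (Suc n)"
    by simp
  also have "\<dots> = S + smult (a n n) (P n) + P (Suc n)"
    using super[of n] unfolding below by (simp add: f_def)
  also have "\<dots> = [:0, 1:] * P n"
    using PS by (simp add: linear_factor_mult)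
  finally show ?thesis .
qed

lemma Lprod_imat_apply_Umat:
  assumes fact: "darboux_factorization p a C \<gamma>" and a: "row_finite a"
    and P: "\<And>n. imat_apply a P n = [:0, 1:] * P n"
  shows "imat_apply (Lprod p \<gamma> imat_id) (imat_apply (Umat p \<gamma>) P) n = [:- C, 1:] * P n"
proof -
  have entry: "a i k - (if i = k then C else 0) = Lprod p \<gamma> (Umat p \<gamma>) i k" for i k
    using fact unfolding darboux_factorization_def by blast
  have "Lprod p \<gamma> (Umat p \<gamma>) = (\<lambda>i k. a i k + (if i = k then - C else 0))"
    by (intro ext) (simp flip: entry)
  then have "imat_apply (Lprod p \<gamma> imat_id) (imat_apply (Umat p \<gamma>) P) n
               = [:0, 1:] * P n + smult (- C) (P n)"
    by (simp add: imat_apply_Lprod[OF row_finite_Umat, symmetric]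
        imat_apply_add[OF a row_finite_diag] imat_apply_diag P)
  then show ?thesis by (simp add: linear_factor_mult)
qed

lemma darboux_christoffel_formula:
  assumes fact: "darboux_factorization p a C \<gamma>" and a: "row_finite a"
    and P: "\<And>n. imat_apply a P n = [:0, 1:] * P n" "P 0 = 1"
    and Pp: "\<And>n. imat_apply (darboux_transform p C \<gamma>) Pp n = [:0, 1:] * Pp n" "Pp 0 = 1"
  shows "[:- C, 1:] * Pp n = imat_apply (Umat p \<gamma>) P n"
proof -
  define L where "L = Lprod p \<gamma> imat_id"
  define w where "w = imat_apply (Umat p \<gamma>) P"
  have L: "lower_unitriangular L" unfolding L_def by (rule lower_unitriangular_Lprod)
  have Lw: "imat_apply L w = (\<lambda>n. [:- C, 1:] * P n)"
    unfolding L_def w_def using Lprod_imat_apply_Umat[OF fact a P(1)] by (rule ext)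
  define Q where "Q n = w n div [:- C, 1:]" for n
  have "[:- C, 1:] dvd w n" for n
    by (rule dvd_of_dvd_imat_apply_lower_unitriangular[OF L]) (metis Lw dvd_triv_left)
  then have wQ: "w = (\<lambda>n. [:- C, 1:] * Q n)"
    unfolding Q_def by (intro ext dvd_mult_div_cancel[symmetric])
  have "[:- C, 1:] * imat_apply (darboux_transform p C \<gamma>) Q n = [:- C, 1:] * ([:0, 1:] * Q n)" for n
  proof -
    have "[:- C, 1:] * imat_apply (darboux_transform p C \<gamma>) Q n
            = imat_apply (darboux_transform p C \<gamma>) w n"
      unfolding wQ by (rule imat_apply_mult_left[symmetric])
    also have "\<dots> = smult C (w n) + imat_apply (Umat p \<gamma>) (\<lambda>m. [:- C, 1:] * P m) n"
      by (simp add: imat_apply_darboux_transform Lw[unfolded L_def])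
    also have "\<dots> = smult C (w n) + [:- C, 1:] * w n"
      unfolding w_def by (simp only: imat_apply_mult_left)
    also have "\<dots> = [:0, 1:] * w n"
      by (simp add: linear_factor_mult)
    finally show ?thesis by (simp add: wQ mult.left_commute)
  qed
  then have Q: "imat_apply (darboux_transform p C \<gamma>) Q n = [:0, 1:] * Q n" for n
    using mult_left_cancel[of "[:- C, 1:]"] by (metis pCons_eq_0_iff zero_neq_one)
  have "w 0 = [:- C, 1:]"
    using fun_cong[OF Lw, of 0] by (simp add: imat_apply_lower_unitriangular[OF L] P)
  then have "Q 0 = 1" by (simp add: Q_def)
  have "Pp = Q"
    by (rule hessenberg_eigenvector_unique[where A = "darboux_transform p C \<gamma>"])
      (simp_all add: darboux_transform_above_superdiag darboux_transform_superdiag Pp Q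
        \<open>Q 0 = 1\<close>)
  then show ?thesis by (simp add: wQ w_def[symmetric])
qed

lemma p_orth_mult_functionals:
  assumes orth: "p_orth p \<nu> P"
    and Q: "\<And>n. d * Q n = smult (g n) (P n) + P (Suc n)" and g: "\<And>n. g n \<noteq> 0"
  shows "p_orth p (\<lambda>r q. \<nu> r (d * q)) Q"
  unfolding p_orth_def
proof (intro conjI ballI allI impI)
  fix r assume r: "r \<in> {1..p}"
  then have lin: "lin_functional (\<nu> r)" using orth by (simp add: p_orth_def)
  then show "lin_functional (\<lambda>q. \<nu> r (d * q))"
    by (simp add: lin_functional_def distrib_left)
  have shift: "\<nu> r (d * (monom 1 k * Q n))
                 = g n * \<nu> r (monom 1 k * P n) + \<nu> r (monom 1 k * P (Suc n))" for k n
  proof -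
    have "d * (monom 1 k * Q n) = monom 1 k * (d * Q n)"
      by (rule mult.left_commute)
    also have "\<dots> = smult (g n) (monom 1 k * P n) + monom 1 k * P (Suc n)"
      by (simp only: Q distrib_left mult_smult_right)
    finally have "d * (monom 1 k * Q n) = smult (g n) (monom 1 k * P n) + monom 1 k * P (Suc n)" .
    with lin show ?thesis by (simp add: lin_functional_def)
  qed
  have vanish: "\<nu> r (monom 1 k * P n) = 0" if "k * p + r \<le> n" for k n
    using orth r that by (simp add: p_orth_def)
  show "\<nu> r (d * (monom 1 k * Q n)) = 0" if "k * p + r \<le> n" for k n
    using that by (simp add: shift vanish)
  show "\<nu> r (d * (monom 1 k * Q (k * p + r - 1))) \<noteq> 0" for k
  proof -
    have "Suc (k * p + r - 1) = k * p + r" using r by simp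
    moreover have "\<nu> r (monom 1 k * P (k * p + r - 1)) \<noteq> 0"
      using orth r by (simp add: p_orth_def)
    ultimately show ?thesis by (simp add: shift vanish g)
  qed
qed

theorem lemma4:
  fixes p :: nat and a :: imat and C :: complex
    and P Pp :: "nat \<Rightarrow> complex poly" and \<gamma> :: "nat \<Rightarrow> complex"
    and \<nu> :: "nat \<Rightarrow> complex poly \<Rightarrow> complex"
  assumes p_pos: "p \<ge> 1"
    and super: "\<And>n. a n (n + 1) = 1"
    and band_up: "\<And>n m. m > n + 1 \<Longrightarrow> a n m = 0"
    and band_low: "\<And>n m. m + p < n \<Longrightarrow> a n m = 0"
    and sub_nz: "\<And>n. a (n + p) n \<noteq> 0"
    and P0: "P 0 = 1"
    and Prec: "\<And>n. P (Suc n) = [:- a n n, 1:] * P n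
                 - (\<Sum>i\<in>{1..p}. if i \<le> n then smult (a n (n - i)) (P (n - i)) else 0)"
    and C_ok: "\<And>n. n \<ge> 1 \<Longrightarrow> poly (P n) C \<noteq> 0"
    and orth: "p_orth p \<nu> P"
    and fact: "darboux_factorization p a C \<gamma>"
    and Pp0: "Pp 0 = 1"
    and Pp_eig: "\<And>n. (\<Sum>m\<in>{m. darboux_transform p C \<gamma> n m \<noteq> 0}.
                        smult (darboux_transform p C \<gamma> n m) (Pp m)) = [:0, 1:] * Pp n"
  shows "p_orth p (\<lambda>r q. \<nu> r ([:- C, 1:] * q)) Pp"
proof -
  have a: "row_finite a" by (rule row_finite_hessenberg) (simp add: band_up)
  have P: "imat_apply a P n = [:0, 1:] * P n" for n
    using recurrence_eigenvector[OF super band_up band_low Prec] .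
  have Pp: "imat_apply (darboux_transform p C \<gamma>) Pp n = [:0, 1:] * Pp n" for n
    using Pp_eig unfolding imat_apply_def .
  have christoffel: "[:- C, 1:] * Pp n = smult (Umat p \<gamma> n n) (P n) + P (Suc n)" for n
    using darboux_christoffel_formula[OF fact a P P0 Pp Pp0] by (simp add: imat_apply_Umat)
  have "Umat p \<gamma> n n \<noteq> 0" for n
  proof
    assume "Umat p \<gamma> n n = 0"
    then have "poly (P (Suc n)) C = 0" using arg_cong[OF christoffel[of n], of "\<lambda>q. poly q C"] by simp
    with C_ok[of "Suc n"] show False by simp
  qed
  with orth christoffel show ?thesis by (rule p_orth_mult_functionals)
qed

end
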